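(* Consider the one-dimensional Euler equations for an ideal gas with $\gamma>1$, and the first order finite volume scheme on a moving mesh \[ h_j^{n+1}\,\bar U_j^{n+1} = h_j^n\,\bar U_j^n - \Delta t_n\,\big[\hat G_{j+1/2}^n - \hat G_{j-1/2}^n\big],\qquad h_j^{n+1} = h_j^n + \Delta t_n\,(w_{j+1/2}^n - w_{j-1/2}^n), \] where $\hat G_{j+1/2}^n = \hat G(\bar U_j^n,\bar U_{j+1}^n,w_{j+1/2}^n)$ is the ALE Rusanov flux with wave speed $\lambda_{j+1/2}^n=\lambda(\bar U_j^n,\bar U_{j+1}^n,w_{j+1/2}^n)$. Fix $\beta\in(0,1)$ and suppose the time step satisfies \[ \Delta t_n \le \min_j\left\{ \frac{(1-\tfrac12\beta)\,h_j^n}{\tfrac12(\lambda_{j-1/2}^n+\lambda_{j+1/2}^n)},\ \frac{\beta\, h_j^n}{|w_{j+1/2}^n - w_{j-1/2}^n|}\right\} \] (the second term is read as $+\infty$ when $w_{j+1/2}^n=w_{j-1/2}^n$). If $\rho_j^n>0$ and $p_j^n>0$ for all $j$, then $h_j^{n+1}>0$, $\rho_j^{n+1}>0$ and $p_j^{n+1}>0$ for all $j$. In other words, the scheme is positivity preserving.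
   Context: Euler equations: $U_t + f(U)_x=0$ with $U=(\rho,\rho v,E)^\top$ and $f(U)=(\rho v,\ p+\rho v^2,\ (E+p)v)^\top$. Here $E=p/(\gamma-1)+\rho v^2/2$ and the sound speed is $c=\sqrt{\gamma p/\rho}$. Mesh: cells $C_j$ have length $h_j^n>0$ at time $t_n$. Each cell face $x_{j+1/2}$ moves with a constant velocity $w_{j+1/2}^n$ on the interval $(t_n,t_{n+1})$. The index $j$ runs over all cells, each of which has two neighbours (for example an infinite or a periodic mesh). $\bar U_j^n$ denotes the cell value, with density $\rho_j^n$, velocity $v_j^n$, pressure $p_j^n$ and sound speed $c_j^n$. ALE flux: $G(U,w)=f(U)-wU$. ALE Rusanov flux: \[ \hat G(U_l,U_r,w)=\tfrac12[G(U_l,w)+G(U_r,w)]-\tfrac12\lambda(U_l,U_r,w)(U_r-U_l), \] with $\lambda(U_l,U_r,w)=\max\{|v_l-w|+c_l,\ |v_r-w|+c_r\}$. *)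

theory Defs
  imports "HOL-Analysis.Analysis"
begin

text \<open>Conserved state U = (rho, rho v, E) as a triple; vector operations on
  real \<times> real \<times> real come from Product_Vector.\<close>
type_synonym state = "real \<times> real \<times> real"

definition density :: "state \<Rightarrow> real" where
  "density U = fst U"

definition momentum :: "state \<Rightarrow> real" where
  "momentum U = fst (snd U)"

definition energy :: "state \<Rightarrow> real" where
  "energy U = snd (snd U)"

definition velocity :: "state \<Rightarrow> real" where
  "velocity U = momentum U / density U"

text \<open>From E = p/(gamma-1) + rho v^2/2.\<close>
definition pressure :: "real \<Rightarrow> state \<Rightarrow> real" where
  "pressure \<gamma> U = (\<gamma> - 1) * (energy U - density U * (velocity U)\<^sup>2 / 2)"

definition sound_speed :: "real \<Rightarrow> state \<Rightarrow> real" where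
  "sound_speed \<gamma> U = sqrt (\<gamma> * pressure \<gamma> U / density U)"

definition euler_flux :: "real \<Rightarrow> state \<Rightarrow> state" where
  "euler_flux \<gamma> U =
     (density U * velocity U,
      pressure \<gamma> U + density U * (velocity U)\<^sup>2,
      (energy U + pressure \<gamma> U) * velocity U)"

definition ale_flux :: "real \<Rightarrow> state \<Rightarrow> real \<Rightarrow> state" where
  "ale_flux \<gamma> U w = euler_flux \<gamma> U - w *\<^sub>R U"

definition rusanov_speed :: "real \<Rightarrow> state \<Rightarrow> state \<Rightarrow> real \<Rightarrow> real" where
  "rusanov_speed \<gamma> Ul Ur w =
     max (\<bar>velocity Ul - w\<bar> + sound_speed \<gamma> Ul) (\<bar>velocity Ur - w\<bar> + sound_speed \<gamma> Ur)"

definition rusanov_flux :: "real \<Rightarrow> state \<Rightarrow> state \<Rightarrow> real \<Rightarrow> state" where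
  "rusanov_flux \<gamma> Ul Ur w =
     (1/2) *\<^sub>R (ale_flux \<gamma> Ul w + ale_flux \<gamma> Ur w)
     - (1/2 * rusanov_speed \<gamma> Ul Ur w) *\<^sub>R (Ur - Ul)"

text \<open>Mesh indexed by integers (infinite mesh). w j is the velocity of face x_{j+1/2},
  so face x_{j-1/2} has velocity w (j-1). Numerical flux at face j+1/2:\<close>
definition face_flux :: "real \<Rightarrow> (int \<Rightarrow> state) \<Rightarrow> (int \<Rightarrow> real) \<Rightarrow> int \<Rightarrow> state" where
  "face_flux \<gamma> U w j = rusanov_flux \<gamma> (U j) (U (j + 1)) (w j)"

definition face_speed :: "real \<Rightarrow> (int \<Rightarrow> state) \<Rightarrow> (int \<Rightarrow> real) \<Rightarrow> int \<Rightarrow> real" where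
  "face_speed \<gamma> U w j = rusanov_speed \<gamma> (U j) (U (j + 1)) (w j)"

definition new_length :: "(int \<Rightarrow> real) \<Rightarrow> (int \<Rightarrow> real) \<Rightarrow> real \<Rightarrow> int \<Rightarrow> real" where
  "new_length h w dt j = h j + dt * (w j - w (j - 1))"

definition new_state ::
  "real \<Rightarrow> (int \<Rightarrow> real) \<Rightarrow> (int \<Rightarrow> state) \<Rightarrow> (int \<Rightarrow> real) \<Rightarrow> real \<Rightarrow> int \<Rightarrow> state" where
  "new_state \<gamma> h U w dt j =
     (1 / new_length h w dt j) *\<^sub>R
       (h j *\<^sub>R U j - dt *\<^sub>R (face_flux \<gamma> U w j - face_flux \<gamma> U w (j - 1)))"

end

theory Submission
  imports Defs
begin

text \<open>For gamma > 1 the states with positive density and pressure are exactly those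
  with rho > 0 and 2 rho E - m^2 > 0, a convex cone. Splitting the Rusanov fluxes, the
  new h U of cell j is a nonnegative combination of U_j, with weight
  h - dt (lambda_{j-1/2} + lambda_{j+1/2})/2 + dt (w_{j+1/2} - w_{j-1/2})/2, which the two CFL
  conditions make nonnegative, and of the neighbour states lambda U -+ G(U, w), which lie
  in the cone as soon as lambda >= |v - w| + c.\<close>

definition admissible :: "state \<Rightarrow> bool" where
  "admissible U \<longleftrightarrow> density U > 0 \<and> 2 * density U * energy U - (momentum U)\<^sup>2 > 0"

lemma state_component_simps [simp]:
  "density (X + Y) = density X + density Y"
  "momentum (X + Y) = momentum X + momentum Y"
  "energy (X + Y) = energy X + energy Y"
  "density (X - Y) = density X - density Y"
  "momentum (X - Y) = momentum X - momentum Y"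
  "energy (X - Y) = energy X - energy Y"
  "density (a *\<^sub>R X) = a * density X"
  "momentum (a *\<^sub>R X) = a * momentum X"
  "energy (a *\<^sub>R X) = a * energy X"
  by (simp_all add: density_def momentum_def energy_def)

lemma ale_flux_component_simps [simp]:
  "density (ale_flux \<gamma> U w) = density U * velocity U - w * density U"
  "momentum (ale_flux \<gamma> U w) = pressure \<gamma> U + density U * (velocity U)\<^sup>2 - w * momentum U"
  "energy (ale_flux \<gamma> U w) = (energy U + pressure \<gamma> U) * velocity U - w * energy U"
  by (simp_all add: ale_flux_def euler_flux_def density_def momentum_def energy_def)

lemma pressure_conservative:
  "density U \<noteq> 0 \<Longrightarrow>
     pressure \<gamma> U = (\<gamma> - 1) * (2 * density U * energy U - (momentum U)\<^sup>2) / (2 * density U)"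
  by (simp add: pressure_def velocity_def power2_eq_square field_simps)

lemma admissible_iff_positive:
  assumes "\<gamma> > 1"
  shows "admissible U \<longleftrightarrow> density U > 0 \<and> pressure \<gamma> U > 0"
  using assms
  by (cases "density U > 0")
     (auto simp: admissible_def pressure_conservative zero_less_mult_iff zero_less_divide_iff)

lemma sound_speed_pos:
  "\<gamma> > 1 \<Longrightarrow> density U > 0 \<Longrightarrow> pressure \<gamma> U > 0 \<Longrightarrow> sound_speed \<gamma> U > 0"
  by (simp add: sound_speed_def)

lemma admissible_scaleR:
  assumes "a > 0" "admissible X"
  shows "admissible (a *\<^sub>R X)"
proof -
  have "a\<^sup>2 * (momentum X)\<^sup>2 < a\<^sup>2 * (2 * density X * energy X)"
    using assms by (intro mult_strict_left_mono) (auto simp: admissible_def)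
  then show ?thesis
    using assms by (simp add: admissible_def power_mult_distrib power2_eq_square algebra_simps)
qed

lemma square_sum_le_weighted:
  fixes r1 r2 m1 m2 :: real
  assumes "r1 > 0" "r2 > 0"
  shows "(m1 + m2)\<^sup>2 \<le> (r1 + r2) * (m1\<^sup>2 / r1 + m2\<^sup>2 / r2)"
proof -
  have "(r1 + r2) * (m1\<^sup>2 / r1 + m2\<^sup>2 / r2) - (m1 + m2)\<^sup>2 = (r2 * m1 - r1 * m2)\<^sup>2 / (r1 * r2)"
    using assms by (simp add: field_simps power2_eq_square)
  moreover have "(r2 * m1 - r1 * m2)\<^sup>2 / (r1 * r2) \<ge> 0"
    using assms by simp
  ultimately show ?thesis
    by linarith
qed

lemma admissible_add:
  assumes X: "admissible X" and Y: "admissible Y"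
  shows "admissible (X + Y)"
proof -
  have r: "density X > 0" "density Y > 0"
    using X Y by (auto simp: admissible_def)
  have "(momentum X)\<^sup>2 / density X < 2 * energy X" "(momentum Y)\<^sup>2 / density Y < 2 * energy Y"
    using X Y r by (simp_all add: admissible_def pos_divide_less_eq mult_ac)
  then have "(density X + density Y) * ((momentum X)\<^sup>2 / density X + (momentum Y)\<^sup>2 / density Y)
      < (density X + density Y) * (2 * energy X + 2 * energy Y)"
    using r by (intro mult_strict_left_mono) auto
  with square_sum_le_weighted[OF r, of "momentum X" "momentum Y"] show ?thesis
    using r by (simp add: admissible_def algebra_simps)
qed

lemma admissible_nonneg_combination:
  assumes "admissible X" "a \<ge> 0" "admissible Y"
  shows "admissible (a *\<^sub>R X + Y)"
  using assms by (cases "a = 0") (simp_all add: admissible_add admissible_scaleR)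

text \<open>The state lambda U - s G(U, w) is (rho a, rho v a - s p, a E - s p v) with
  a = lambda - s (v - w); the hypothesis on a is a >= c.\<close>
lemma wave_state_quadratic_pos:
  fixes \<rho> v p \<gamma> a s E :: real
  assumes \<rho>: "\<rho> > 0" and p: "p > 0" and \<gamma>: "\<gamma> > 1" and s: "s\<^sup>2 = 1"
    and a: "a\<^sup>2 * \<rho> \<ge> \<gamma> * p" and E: "E = p / (\<gamma> - 1) + \<rho> * v\<^sup>2 / 2"
  shows "2 * (\<rho> * a) * (a * E - s * p * v) - (\<rho> * v * a - s * p)\<^sup>2 > 0"
proof -
  have "2 * (\<rho> * a) * (a * E - s * p * v) - (\<rho> * v * a - s * p)\<^sup>2
        = 2 * (a\<^sup>2 * \<rho>) * p / (\<gamma> - 1) - p\<^sup>2"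
    using \<gamma> s unfolding E by (simp add: field_simps power2_eq_square)
  moreover have "2 * (a\<^sup>2 * \<rho>) * p / (\<gamma> - 1) \<ge> 2 * (\<gamma> * p) * p / (\<gamma> - 1)"
    using a \<gamma> p by (intro divide_right_mono mult_right_mono mult_left_mono) auto
  moreover have "2 * (\<gamma> * p) * p / (\<gamma> - 1) > p\<^sup>2"
    using \<gamma> p by (simp add: field_simps power2_eq_square add_pos_pos)
  ultimately show ?thesis
    by linarith
qed

lemma admissible_wave_minus_ale_flux:
  assumes \<gamma>: "\<gamma> > 1" and \<rho>: "density U > 0" and p: "pressure \<gamma> U > 0"
    and s: "s = 1 \<or> s = -1" and l: "l \<ge> \<bar>velocity U - w\<bar> + sound_speed \<gamma> U"
  shows "admissible (l *\<^sub>R U - s *\<^sub>R ale_flux \<gamma> U w)"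
proof -
  define v where "v = velocity U"
  define a where "a = l - s * (v - w)"
  have m: "momentum U = density U * v"
    using \<rho> by (simp add: v_def velocity_def)
  have E: "energy U = pressure \<gamma> U / (\<gamma> - 1) + density U * v\<^sup>2 / 2"
    using \<gamma> by (simp add: v_def pressure_def field_simps)
  have c: "sound_speed \<gamma> U > 0"
    using sound_speed_pos[OF \<gamma> \<rho> p] .
  have "s * (v - w) \<le> \<bar>v - w\<bar>"
    using s by auto
  then have a_ge_c: "a \<ge> sound_speed \<gamma> U"
    using l by (simp add: a_def v_def)
  then have "a\<^sup>2 \<ge> (sound_speed \<gamma> U)\<^sup>2"
    using c by (simp add: power_mono)
  also have "(sound_speed \<gamma> U)\<^sup>2 = \<gamma> * pressure \<gamma> U / density U"
    using \<gamma> \<rho> p by (simp add: sound_speed_def)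
  finally have "a\<^sup>2 * density U \<ge> \<gamma> * pressure \<gamma> U"
    using \<rho> by (simp add: pos_divide_le_eq)
  moreover have "density (l *\<^sub>R U - s *\<^sub>R ale_flux \<gamma> U w) = density U * a"
    "momentum (l *\<^sub>R U - s *\<^sub>R ale_flux \<gamma> U w) = density U * v * a - s * pressure \<gamma> U"
    "energy (l *\<^sub>R U - s *\<^sub>R ale_flux \<gamma> U w) = a * energy U - s * pressure \<gamma> U * v"
    using m by (simp_all add: v_def a_def power2_eq_square algebra_simps)
  moreover have "s\<^sup>2 = 1"
    using s by auto
  ultimately show ?thesis
    using wave_state_quadratic_pos[OF \<rho> p \<gamma> _ _ E] \<rho> a_ge_c c
    by (simp add: admissible_def)
qed

lemma rusanov_speed_ge:
  "rusanov_speed \<gamma> Ul Ur w \<ge> \<bar>velocity Ul - w\<bar> + sound_speed \<gamma> Ul"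
  "rusanov_speed \<gamma> Ul Ur w \<ge> \<bar>velocity Ur - w\<bar> + sound_speed \<gamma> Ur"
  by (simp_all add: rusanov_speed_def)

text \<open>The two ALE fluxes of the middle state only differ by (wl - wr) U.\<close>
lemma rusanov_update_split:
  fixes \<gamma> h dt wl wr :: real and Ul U Ur :: state
  defines "l\<^sub>l \<equiv> rusanov_speed \<gamma> Ul U wl" and "l\<^sub>r \<equiv> rusanov_speed \<gamma> U Ur wr"
  shows "h *\<^sub>R U - dt *\<^sub>R (rusanov_flux \<gamma> U Ur wr - rusanov_flux \<gamma> Ul U wl)
    = (h - dt / 2 * (l\<^sub>l + l\<^sub>r) + dt / 2 * (wr - wl)) *\<^sub>R U
      + (dt / 2) *\<^sub>R (l\<^sub>r *\<^sub>R Ur - 1 *\<^sub>R ale_flux \<gamma> Ur wr)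
      + (dt / 2) *\<^sub>R (l\<^sub>l *\<^sub>R Ul - (-1) *\<^sub>R ale_flux \<gamma> Ul wl)"
  unfolding rusanov_flux_def l\<^sub>l_def[symmetric] l\<^sub>r_def[symmetric]
  by (simp add: ale_flux_def prod_eq_iff field_simps)

lemma cfl_weight_nonneg:
  fixes dt h \<beta> l \<delta> :: real
  assumes "dt \<ge> 0" "l > 0" and "dt \<le> (1 - \<beta> / 2) * h / (l / 2)" and "dt * \<bar>\<delta>\<bar> \<le> \<beta> * h"
  shows "h - dt / 2 * l + dt / 2 * \<delta> \<ge> 0"
proof -
  have "dt * (l / 2) \<le> (1 - \<beta> / 2) * h"
    using assms by (simp add: pos_le_divide_eq)
  moreover have "- (dt * \<delta>) \<le> dt * \<bar>\<delta>\<bar>"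
    using mult_left_mono[OF abs_ge_minus_self[of \<delta>] \<open>dt \<ge> 0\<close>] by simp
  ultimately show ?thesis
    using assms(4) by (simp add: algebra_simps)
qed

lemma cfl_mesh_bound:
  fixes dt h \<beta> \<delta> :: real
  assumes "dt > 0" "h > 0" "\<beta> > 0" and "\<delta> \<noteq> 0 \<longrightarrow> dt \<le> \<beta> * h / \<bar>\<delta>\<bar>"
  shows "dt * \<bar>\<delta>\<bar> \<le> \<beta> * h"
  using assms by (cases "\<delta> = 0") (simp_all add: pos_le_divide_eq mult.commute)

lemma new_length_pos:
  fixes dt h \<beta> \<delta> :: real
  assumes "dt \<ge> 0" "h > 0" "\<beta> < 1" "dt * \<bar>\<delta>\<bar> \<le> \<beta> * h"
  shows "h + dt * \<delta> > 0"
proof -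
  have "\<bar>dt * \<delta>\<bar> \<le> \<beta> * h" "\<beta> * h < h"
    using assms by (simp_all add: abs_mult)
  then show ?thesis
    by linarith
qed

theorem theorem1:
  fixes \<gamma> \<beta> dt :: real
    and h w :: "int \<Rightarrow> real"
    and U :: "int \<Rightarrow> state"
  assumes gamma: "\<gamma> > 1"
    and beta: "0 < \<beta>" "\<beta> < 1"
    and dt_pos: "dt > 0"
    and h_pos: "\<forall>j. h j > 0"
    and rho_pos: "\<forall>j. density (U j) > 0"
    and p_pos: "\<forall>j. pressure \<gamma> (U j) > 0"
    and cfl1: "\<forall>j. dt \<le> (1 - \<beta> / 2) * h j
                     / ((face_speed \<gamma> U w (j - 1) + face_speed \<gamma> U w j) / 2)"
    and cfl2: "\<forall>j. w j \<noteq> w (j - 1) \<longrightarrow> dt \<le> \<beta> * h j / \<bar>w j - w (j - 1)\<bar>"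
  shows "\<forall>j. new_length h w dt j > 0
           \<and> density (new_state \<gamma> h U w dt j) > 0
           \<and> pressure \<gamma> (new_state \<gamma> h U w dt j) > 0"
proof
  fix j
  let ?l\<^sub>l = "face_speed \<gamma> U w (j - 1)" and ?l\<^sub>r = "face_speed \<gamma> U w j"
  have l\<^sub>l: "?l\<^sub>l \<ge> \<bar>velocity (U (j - 1)) - w (j - 1)\<bar> + sound_speed \<gamma> (U (j - 1))"
    and l\<^sub>r: "?l\<^sub>r \<ge> \<bar>velocity (U (j + 1)) - w j\<bar> + sound_speed \<gamma> (U (j + 1))"
    by (simp_all add: face_speed_def rusanov_speed_ge)
  have "sound_speed \<gamma> (U (j - 1)) > 0" "sound_speed \<gamma> (U (j + 1)) > 0"
    using sound_speed_pos[OF gamma] rho_pos p_pos by simp_all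
  then have "?l\<^sub>l + ?l\<^sub>r > 0"
    using l\<^sub>l l\<^sub>r abs_ge_zero[of "velocity (U (j - 1)) - w (j - 1)"]
      abs_ge_zero[of "velocity (U (j + 1)) - w j"] by linarith
  moreover have mesh: "dt * \<bar>w j - w (j - 1)\<bar> \<le> \<beta> * h j"
    using cfl_mesh_bound[OF dt_pos, of "h j" \<beta> "w j - w (j - 1)"] h_pos beta cfl2 by simp
  ultimately have weight: "h j - dt / 2 * (?l\<^sub>l + ?l\<^sub>r) + dt / 2 * (w j - w (j - 1)) \<ge> 0"
    using cfl_weight_nonneg[of dt "?l\<^sub>l + ?l\<^sub>r" \<beta> "h j"] cfl1 dt_pos by simp
  have length: "new_length h w dt j > 0"
    using new_length_pos[of dt "h j" \<beta> "w j - w (j - 1)"] dt_pos h_pos beta mesh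
    by (simp add: new_length_def)
  have "admissible (U j)"
    using gamma rho_pos p_pos by (simp add: admissible_iff_positive)
  moreover have "admissible (?l\<^sub>r *\<^sub>R U (j + 1) - 1 *\<^sub>R ale_flux \<gamma> (U (j + 1)) (w j))"
    using l\<^sub>r gamma rho_pos p_pos by (intro admissible_wave_minus_ale_flux) simp_all
  moreover have "admissible (?l\<^sub>l *\<^sub>R U (j - 1) - (-1) *\<^sub>R ale_flux \<gamma> (U (j - 1)) (w (j - 1)))"
    using l\<^sub>l gamma rho_pos p_pos by (intro admissible_wave_minus_ale_flux) simp_all
  ultimately have "admissible (h j *\<^sub>R U j - dt *\<^sub>R (face_flux \<gamma> U w j - face_flux \<gamma> U w (j - 1)))"
    using weight dt_pos
    by (simp add: face_flux_def face_speed_def rusanov_update_split add.assoc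
        admissible_nonneg_combination admissible_add admissible_scaleR)
  then have "admissible (new_state \<gamma> h U w dt j)"
    unfolding new_state_def using length by (intro admissible_scaleR) auto
  with length gamma show "new_length h w dt j > 0
           \<and> density (new_state \<gamma> h U w dt j) > 0
           \<and> pressure \<gamma> (new_state \<gamma> h U w dt j) > 0"
    by (simp add: admissible_iff_positive)
qed

end
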